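(* Let $g(x)\in A$. If $f(x)=x^2+ax-1$ for some $a\in\mathbb{F}$, then $M_g^T=M_g$. If $f(x)=x^m\pm1$, then $M_g^T=M_h$, where $h(x)=g(x^{-1})\in A$ (here $x$ is invertible in $A$), equivalently $h(x)=g^R(x)/x^{\deg g}$.
   Context: Let $\mathbb{F}$ be a finite field, $f(x)=x^m+\sum_{i=0}^{m-1}f_ix^i\in\mathbb{F}[x]$ monic of degree $m$, $A=\mathbb{F}[x]/\langle f(x)\rangle$, elements identified with polynomials of degree $<m$. $M_x$ is the $m\times m$ companion matrix of $f$: its $i$-th row is the unit vector $e_{i+1}$ for $1\le i\le m-1$ and its last row is $(-f_0,\ldots,-f_{m-1})$. For $g(x)=\sum_{i=0}^{m-1}a_ix^i\in A$, $M_g=\sum_{i=0}^{m-1}a_iM_x^i$. For $g\in\mathbb{F}[x]$, $g^R(x)=x^{\deg g}g(x^{-1})$ is its reciprocal polynomial. *)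

theory Defs
  imports "Jordan_Normal_Form.Matrix" "HOL-Computational_Algebra.Polynomial"
begin

definition companion_mat :: "'a::comm_ring_1 poly \<Rightarrow> 'a mat" where
  "companion_mat f = (let m = degree f in
     mat m m (\<lambda>(i,j). if i + 1 < m then (if j = i + 1 then 1 else 0)
                      else - coeff f j))"

definition mult_mat :: "'a::comm_ring_1 poly \<Rightarrow> 'a poly \<Rightarrow> 'a mat" where
  "mult_mat f g = (let m = degree f in
     mat m m (\<lambda>(i,j). \<Sum>k<m. coeff g k * (companion_mat f ^\<^sub>m k) $$ (i,j)))"

end

theory Submission
  imports Defs
begin

text \<open>Row \<open>i\<close> of \<open>M_g\<close> is the coefficient vector of \<open>x\<^sup>i g mod f\<close>, because right multiplication by
  the companion matrix is multiplication by \<open>x\<close> followed by reduction modulo \<open>f\<close>. For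
  \<open>f = x\<^sup>2 + ax - 1\<close> the only off-diagonal entries are \<open>g\<^sub>1\<close> and the constant term of
  \<open>x g mod f = x g - g\<^sub>1 f\<close>, which is \<open>g\<^sub>1\<close> again since \<open>f(0) = -1\<close>. For \<open>f = x\<^sup>m - c\<close> with
  \<open>c = \<plusminus>1\<close>, reduction turns \<open>x\<^sup>m\<close> into \<open>c\<close>, so \<open>M_g(i,j)\<close> is \<open>g\<^sub>j\<^sub>-\<^sub>i\<close> above the diagonal and
  \<open>c g\<^sub>j\<^sub>+\<^sub>m\<^sub>-\<^sub>i\<close> below it; since \<open>x\<^sup>-\<^sup>k = c x\<^sup>m\<^sup>-\<^sup>k\<close>, the polynomial \<open>h = g(x\<^sup>-\<^sup>1)\<close> has
  \<open>h\<^sub>0 = g\<^sub>0\<close> and \<open>h\<^sub>t = c g\<^sub>m\<^sub>-\<^sub>t\<close>, and comparing entries (using \<open>c\<^sup>2 = 1\<close>) gives \<open>M_g\<^sup>T = M_h\<close>.\<close>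

lemma mod_poly_sum_distrib:
  fixes f :: "'a::field poly"
  shows "finite A \<Longrightarrow> sum h A mod f = (\<Sum>i\<in>A. h i mod f)"
  by (induction A rule: finite_induct) (auto simp: poly_mod_add_left)

lemma monom_1_1_mult: "monom 1 1 * p = pCons 0 (p::'a::comm_ring_1 poly)"
proof -
  have "monom (1::'a) 1 = [:0,1:]" by (simp add: monom_Suc one_pCons)
  then show ?thesis
    by (simp only: mult_pCons_left smult_0_left add_0 mult_1_left one_pCons[symmetric] pCons_0_0)
qed

lemma pCons_0_mod_eq: "pCons 0 p mod f = pCons 0 (p mod f) mod (f::'a::field poly)"
  by (metis monom_1_1_mult mod_mult_right_eq)

text \<open>Multiplying a reduced polynomial by \<open>x\<close> overflows into degree \<open>deg f\<close> at most once,
  so a single subtraction of \<open>f\<close> reduces it again.\<close>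
lemma pCons_0_mod_monic:
  fixes f p :: "'a::field poly"
  assumes monic: "lead_coeff f = 1" and p: "degree p < degree f"
  shows "pCons 0 p mod f = pCons 0 p - smult (coeff p (degree f - 1)) f"
proof -
  let ?m = "degree f"
  let ?r = "pCons 0 p - smult (coeff p (?m - 1)) f"
  obtain d where d: "?m = Suc d" using p by (cases ?m) auto
  have "coeff ?r n = 0" if n: "?m \<le> n" for n
  proof (cases "n = ?m")
    case True
    then show ?thesis using monic d by (simp add: coeff_pCons)
  next
    case False
    then show ?thesis using n p d coeff_eq_0[of f n] coeff_eq_0[of p "n - 1"]
      by (cases n) (auto simp: coeff_pCons)
  qed
  then have "degree ?r \<le> d" using d by (intro degree_le) auto
  then have "degree ?r < ?m" using d by simp
  then have "?r mod f = ?r" by (rule mod_poly_less)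
  moreover have "?r mod f = pCons 0 p mod f"
    by (simp add: poly_mod_diff_left mod_smult_left)
  ultimately show ?thesis by simp
qed

lemma companion_mat_carrier: "companion_mat f \<in> carrier_mat (degree f) (degree f)"
  by (simp add: companion_mat_def Let_def)

lemma companion_mat_entry: "i < degree f \<Longrightarrow> j < degree f \<Longrightarrow> companion_mat f $$ (i,j) =
   (if i + 1 < degree f then (if j = i + 1 then 1 else 0) else - coeff f j)"
  by (simp add: companion_mat_def Let_def)

text \<open>Right multiplication by \<open>M_x\<close> shifts a row and subtracts a multiple of the last row,
  which is the reduction step of \<open>pCons_0_mod_monic\<close>.\<close>
lemma companion_mat_pow_entry:
  fixes f :: "'a::field poly"
  assumes monic: "lead_coeff f = 1" and i: "i < degree f" and j: "j < degree f"
  shows "(companion_mat f ^\<^sub>m k) $$ (i,j) = coeff (monom 1 (i+k) mod f) j"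
  using j
proof (induction k arbitrary: j)
  case 0
  have "monom 1 i mod f = monom (1::'a) i"
    using i by (intro mod_poly_less) (simp add: degree_monom_eq)
  then show ?case using 0 i companion_mat_carrier[of f] by (simp add: coeff_monom)
next
  case (Suc k)
  let ?m = "degree f" and ?A = "companion_mat f"
  let ?p = "monom 1 (i+k) mod f"
  have f0: "f \<noteq> 0" using i by auto
  have dp: "degree ?p < ?m" using degree_mod_less[OF f0, of "monom 1 (i+k)"] i by auto
  have split: "{0..<?m} = insert (?m - 1) {0..<?m - 1}" using i by auto
  have "(?A ^\<^sub>m Suc k) $$ (i,j) = (\<Sum>l\<in>{0..<?m}. coeff ?p l * ?A $$ (l,j))"
    using companion_mat_carrier[of f] i Suc by (simp add: scalar_prod_def)
  also have "\<dots> = (\<Sum>l\<in>{0..<?m - 1}. coeff ?p l * ?A $$ (l,j)) - coeff ?p (?m - 1) * coeff f j"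
    using Suc.prems i by (simp add: split companion_mat_entry)
  also have "(\<Sum>l\<in>{0..<?m - 1}. coeff ?p l * ?A $$ (l,j)) = (\<Sum>l\<in>{0..<?m - 1}. if l + 1 = j then coeff ?p l else 0)"
    using Suc.prems by (intro sum.cong) (auto simp: companion_mat_entry)
  also have "(\<Sum>l\<in>{0..<?m - 1}. if l + 1 = j then coeff ?p l else 0) = (if j = 0 then 0 else coeff ?p (j - 1))"
    using Suc.prems by (cases j) (simp_all add: sum.delta')
  also have "\<dots> - coeff ?p (?m - 1) * coeff f j = coeff (monom 1 (i + Suc k) mod f) j"
    using pCons_0_mod_eq[of "monom 1 (i+k)" f] pCons_0_mod_monic[OF monic dp]
    by (cases j) (simp_all add: monom_Suc coeff_pCons)
  finally show ?case .
qed

lemma dim_row_mult_mat [simp]: "dim_row (mult_mat f g) = degree f"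
  and dim_col_mult_mat [simp]: "dim_col (mult_mat f g) = degree f"
  by (simp_all add: mult_mat_def Let_def)

lemma mult_mat_entry_sum:
  fixes f g :: "'a::field poly"
  assumes monic: "lead_coeff f = 1" and i: "i < degree f" and j: "j < degree f"
  shows "mult_mat f g $$ (i,j) = (\<Sum>k<degree f. coeff g k * coeff (monom 1 (i+k) mod f) j)"
  using i j by (simp add: mult_mat_def Let_def companion_mat_pow_entry[OF monic i j])

lemma sum_monom_coeff_lessThan:
  "degree (g::'a::comm_ring_1 poly) < m \<Longrightarrow> (\<Sum>k<m. monom (coeff g k) k) = g"
  using poly_as_sum_of_monoms'[of g "m - 1"] by (cases m) (auto simp: lessThan_Suc_atMost)

lemma mult_mat_entry:
  fixes f g :: "'a::field poly"
  assumes monic: "lead_coeff f = 1" and g: "degree g < degree f"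
    and i: "i < degree f" and j: "j < degree f"
  shows "mult_mat f g $$ (i,j) = coeff ((monom 1 i * g) mod f) j"
proof -
  have "monom 1 i * g = (\<Sum>k<degree f. smult (coeff g k) (monom 1 (i+k)))"
    by (subst (1) sum_monom_coeff_lessThan[OF g, symmetric])
      (simp add: sum_distrib_left mult_monom smult_monom)
  then have "(monom 1 i * g) mod f = (\<Sum>k<degree f. smult (coeff g k) (monom 1 (i+k) mod f))"
    by (simp add: mod_poly_sum_distrib mod_smult_left)
  then show ?thesis by (simp add: mult_mat_entry_sum[OF monic i j] coeff_sum)
qed

lemma transpose_mult_mat_quadratic:
  fixes g :: "'a::field poly"
  assumes f: "f = [:-1, a, 1:]" and g: "degree g < degree f"
  shows "transpose_mat (mult_mat f g) = mult_mat f g"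
proof -
  have df: "degree f = 2" and monic: "lead_coeff f = 1" using f by simp_all
  have "mult_mat f g $$ (0,1) = coeff g 1"
    using mult_mat_entry[OF monic g] g by (simp add: df mod_poly_less)
  also have "\<dots> = coeff ((monom 1 1 * g) mod f) 0"
    using pCons_0_mod_monic[OF monic g] unfolding monom_1_1_mult by (simp add: df f)
  also have "\<dots> = mult_mat f g $$ (1,0)"
    using mult_mat_entry[OF monic g, of 1 0] by (simp add: df)
  finally show ?thesis
    by (intro eq_matI) (auto simp: df less_2_cases_iff)
qed

lemma degree_monom_minus_const:
  fixes c :: "'a::comm_ring_1"
  assumes m: "m \<ge> 1"
  shows "degree (monom 1 m - [:c:]) = m"
proof -
  have "degree (- [:c:]) < degree (monom (1::'a) m)" using m by (simp add: degree_monom_eq)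
  then show ?thesis
    by (simp only: diff_conv_add_uminus degree_add_eq_left) (simp add: degree_monom_eq)
qed

lemma lead_coeff_monom_minus_const:
  fixes c :: "'a::comm_ring_1"
  assumes m: "m \<ge> 1"
  shows "lead_coeff (monom 1 m - [:c:]) = 1"
  using m by (cases m) (simp_all add: degree_monom_minus_const coeff_pCons)

lemma monom_mod_monom_minus_const:
  fixes c :: "'a::field"
  assumes fc: "f = monom 1 m - [:c:]" and m: "m \<ge> 1" and n: "n < 2 * m"
  shows "monom 1 n mod f = (if n < m then monom 1 n else smult c (monom 1 (n - m)))"
proof (cases "n < m")
  case True
  then show ?thesis using fc m by (simp add: mod_poly_less degree_monom_eq degree_monom_minus_const)
next
  case False
  have split: "monom 1 n = smult c (monom 1 (n - m)) + monom 1 (n - m) * f"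
    using False unfolding fc by (simp add: algebra_simps mult_monom smult_monom)
  have "degree (smult c (monom (1::'a) (n - m))) \<le> n - m"
    by (metis degree_monom_le degree_smult_le order_trans)
  then have "degree (smult c (monom (1::'a) (n - m))) < degree f"
    using fc m n by (simp add: degree_monom_minus_const)
  then show ?thesis using False by (simp add: split mod_poly_less)
qed

lemma mult_mat_entry_monom_minus_const:
  fixes c :: "'a::field"
  assumes fc: "f = monom 1 m - [:c:]" and m: "m \<ge> 1" and i: "i < m" and j: "j < m"
  shows "mult_mat f g $$ (i,j) = (if i \<le> j then coeff g (j - i) else c * coeff g (j + m - i))"
proof -
  have df: "degree f = m" using fc m by (simp add: degree_monom_minus_const)
  have monic: "lead_coeff f = 1" unfolding fc by (rule lead_coeff_monom_minus_const[OF m])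
  have "mult_mat f g $$ (i,j) = (\<Sum>k<m. coeff g k * coeff (monom 1 (i+k) mod f) j)"
    using mult_mat_entry_sum[OF monic, of i j g] df i j by simp
  also have "\<dots> = (\<Sum>k<m. if i \<le> j then (if k = j - i then coeff g k else 0)
                          else (if k = j + m - i then c * coeff g k else 0))"
    using i j by (intro sum.cong refl) (auto simp: monom_mod_monom_minus_const[OF fc m] coeff_monom)
  also have "\<dots> = (if i \<le> j then coeff g (j - i) else c * coeff g (j + m - i))"
    using i j by (auto simp: sum.delta)
  finally show ?thesis .
qed

lemma inverse_pow_mod:
  fixes f u w :: "'a::field poly"
  assumes u: "(monom 1 1 * u) mod f = 1" and w: "(monom 1 k * w) mod f = 1"
  shows "u ^ k mod f = w mod f"
proof -
  have "u ^ k mod f = (u ^ k * ((monom 1 k * w) mod f)) mod f" using w by simp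
  also have "\<dots> = ((monom 1 1 * u) ^ k * w) mod f"
    by (simp add: mod_mult_right_eq power_mult_distrib monom_power mult_ac)
  also have "\<dots> = ((((monom 1 1 * u) mod f) ^ k mod f) * w) mod f"
    by (simp add: power_mod mod_mult_left_eq)
  also have "\<dots> = w mod f" using u by (simp add: mod_mult_left_eq)
  finally show ?thesis .
qed

lemma monom_mult_inverse_pow_mod:
  fixes f u :: "'a::field poly"
  assumes u: "(monom 1 1 * u) mod f = 1" and k: "k \<le> d"
  shows "(monom 1 (d - k) * u ^ d) mod f = u ^ k mod f"
proof -
  have "monom 1 (d - k) * u ^ d = (monom 1 1 * u) ^ (d - k) * u ^ k"
    using k by (simp add: power_mult_distrib monom_power mult_ac flip: power_add)
  then have "(monom 1 (d - k) * u ^ d) mod f = ((((monom 1 1 * u) mod f) ^ (d - k) mod f) * u ^ k) mod f"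
    by (simp add: power_mod mod_mult_left_eq)
  also have "\<dots> = u ^ k mod f" using u by (simp add: mod_mult_left_eq)
  finally show ?thesis .
qed

lemma pcompose_monom: "pcompose (monom c k) u = smult c (u ^ k)"
proof -
  have "pcompose ([:0,1:] ^ k) u = u ^ k"
    by (induction k) (simp_all add: pcompose_1 pcompose_mult pcompose_pCons)
  then show ?thesis by (simp add: monom_altdef pcompose_smult)
qed

lemma pcompose_eq_sum_powers:
  "degree (g::'a::comm_ring_1 poly) \<le> n \<Longrightarrow> pcompose g u = (\<Sum>k\<le>n. smult (coeff g k) (u ^ k))"
  by (subst (1) poly_as_sum_of_monoms'[symmetric]) (simp_all add: pcompose_sum pcompose_monom)

lemma inverse_pow_mod_monom_minus_const:
  fixes c :: "'a::field"
  assumes fc: "f = monom 1 m - [:c:]" and m: "m \<ge> 1" and cc: "c * c = 1"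
    and u: "(monom 1 1 * u) mod f = 1" and k: "k < m"
  shows "u ^ k mod f = (if k = 0 then 1 else smult c (monom 1 (m - k)))"
proof -
  let ?w = "(if k = 0 then 1 else smult c (monom 1 (m - k))) :: 'a poly"
  have df: "degree f = m" using fc m by (simp add: degree_monom_minus_const)
  have one: "(1::'a poly) mod f = 1" using df m by (simp add: mod_poly_less)
  have "(monom 1 k * ?w) mod f = 1"
  proof (cases "k = 0")
    case True then show ?thesis using one by simp
  next
    case False
    have "monom 1 k * ?w = smult c (monom 1 m)"
      using False k by (simp add: mult_monom smult_monom)
    moreover have "monom 1 m mod f = [:c:]"
      using monom_mod_monom_minus_const[OF fc m, of m] m by (simp add: monom_0)
    ultimately show ?thesis using cc by (simp add: mod_smult_left)
  qed
  then have "u ^ k mod f = ?w mod f" by (rule inverse_pow_mod[OF u])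
  also have "?w mod f = ?w"
  proof (rule mod_poly_less)
    have "degree (smult c (monom (1::'a) (m - k))) \<le> m - k"
      by (metis degree_monom_le degree_smult_le order_trans)
    then show "degree ?w < degree f" using df m k by auto
  qed
  finally show ?thesis .
qed

lemma coeff_pcompose_inverse_mod_monom_minus_const:
  fixes c :: "'a::field"
  assumes fc: "f = monom 1 m - [:c:]" and m: "m \<ge> 1" and cc: "c * c = 1"
    and u: "(monom 1 1 * u) mod f = 1" and g: "degree g < m" and t: "t < m"
  shows "coeff (pcompose g u mod f) t = (if t = 0 then coeff g 0 else c * coeff g (m - t))"
proof -
  have "pcompose g u mod f = (\<Sum>k\<le>m - 1. smult (coeff g k) (u ^ k mod f))"
    using pcompose_eq_sum_powers[of g "m - 1" u] g
    by (simp add: mod_poly_sum_distrib mod_smult_left)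
  then have "coeff (pcompose g u mod f) t = (\<Sum>k\<le>m - 1. coeff g k * coeff (u ^ k mod f) t)"
    by (simp add: coeff_sum)
  also have "\<dots> = (\<Sum>k\<le>m - 1. if t = 0 then (if k = 0 then coeff g k else 0)
                 else (if k = m - t then c * coeff g k else 0))"
    using m t by (intro sum.cong refl)
      (auto simp: inverse_pow_mod_monom_minus_const[OF fc m cc u] coeff_monom)
  also have "\<dots> = (if t = 0 then coeff g 0 else c * coeff g (m - t))"
    using t by (auto simp: sum.delta)
  finally show ?thesis .
qed

lemma transpose_mult_mat_monom_minus_const:
  fixes c :: "'a::field"
  assumes fc: "f = monom 1 m - [:c:]" and m: "m \<ge> 1" and cc: "c * c = 1"
    and u: "(monom 1 1 * u) mod f = 1" and g: "degree g < m"
  shows "transpose_mat (mult_mat f g) = mult_mat f (pcompose g u mod f)"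
proof
  let ?h = "pcompose g u mod f"
  have df: "degree f = m" using fc m by (simp add: degree_monom_minus_const)
  note entry = mult_mat_entry_monom_minus_const[OF fc m]
  note coeff_h = coeff_pcompose_inverse_mod_monom_minus_const[OF fc m cc u g]
  fix i j assume "i < dim_row (mult_mat f ?h)" "j < dim_col (mult_mat f ?h)"
  then have i: "i < m" and j: "j < m" by (simp_all add: df)
  consider "i = j" | "i < j" | "j < i" by linarith
  then show "transpose_mat (mult_mat f g) $$ (i,j) = mult_mat f ?h $$ (i,j)"
  proof cases
    case 1
    then show ?thesis using i j m by (simp add: df entry coeff_h)
  next
    case 2
    then have "m - (j - i) = i + m - j" using j by simp
    then show ?thesis using 2 i j by (simp add: df entry coeff_h)
  next
    case 3
    then have "m - (j + m - i) = i - j" "j + m - i < m" "j + m - i \<noteq> 0" using i by auto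
    then show ?thesis using 3 i j cc by (simp add: df entry coeff_h mult.assoc[symmetric])
  qed
qed simp_all

lemma reflect_poly_eq_sum_monom:
  "reflect_poly g = (\<Sum>k\<le>degree g. monom (coeff g k) (degree g - k))"
proof (rule poly_eqI)
  fix n
  let ?d = "degree g"
  have "coeff (\<Sum>k\<le>?d. monom (coeff g k) (?d - k)) n
      = (\<Sum>k\<le>?d. if k = ?d - n \<and> n \<le> ?d then coeff g k else 0)"
    unfolding coeff_sum by (intro sum.cong refl) (auto simp: coeff_monom)
  also have "\<dots> = (if n \<le> ?d then coeff g (?d - n) else 0)"
    by (cases "n \<le> ?d") (auto simp: sum.delta)
  finally show "coeff (reflect_poly g) n = coeff (\<Sum>k\<le>?d. monom (coeff g k) (?d - k)) n"
    by (simp add: coeff_reflect_poly)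
qed

text \<open>The identity \<open>g(x\<^sup>-\<^sup>1) = g\<^sup>R(x) / x\<^sup>d\<close>, \<open>d = deg g\<close>, with \<open>u\<close> standing for \<open>x\<^sup>-\<^sup>1\<close>:
  termwise, \<open>x\<^sup>d\<^sup>-\<^sup>k u\<^sup>d = u\<^sup>k\<close>.\<close>
lemma pcompose_inverse_mod_eq_reflect:
  fixes f g u :: "'a::field poly"
  assumes u: "(monom 1 1 * u) mod f = 1"
  shows "pcompose g u mod f = (reflect_poly g * u ^ degree g) mod f"
proof -
  let ?d = "degree g"
  have "reflect_poly g * u ^ ?d = (\<Sum>k\<le>?d. smult (coeff g k) (monom 1 (?d - k) * u ^ ?d))"
    unfolding reflect_poly_eq_sum_monom by (simp add: sum_distrib_right smult_monom_mult)
  then have "(reflect_poly g * u ^ ?d) mod f = (\<Sum>k\<le>?d. smult (coeff g k) ((monom 1 (?d - k) * u ^ ?d) mod f))"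
    by (simp add: mod_poly_sum_distrib mod_smult_left)
  also have "\<dots> = (\<Sum>k\<le>?d. smult (coeff g k) (u ^ k mod f))"
    by (intro sum.cong refl) (simp add: monom_mult_inverse_pow_mod[OF u])
  also have "\<dots> = pcompose g u mod f"
    using pcompose_eq_sum_powers[of g ?d u] by (simp add: mod_poly_sum_distrib mod_smult_left)
  finally show ?thesis by simp
qed

theorem mainTheorem14:
  fixes f g :: "'a::{field,finite} poly"
  assumes monic: "lead_coeff f = 1"
    and gA: "degree g < degree f"
  shows "(\<forall>a. f = [:-1, a, 1:] \<longrightarrow> transpose_mat (mult_mat f g) = mult_mat f g)
       \<and> (\<forall>m u. m \<ge> 1 \<and> (f = monom 1 m + 1 \<or> f = monom 1 m - 1)
              \<and> degree u < degree f \<and> (monom 1 1 * u) mod f = 1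
           \<longrightarrow> transpose_mat (mult_mat f g) = mult_mat f (pcompose g u mod f)
             \<and> pcompose g u mod f = (reflect_poly g * u ^ degree g) mod f)"
proof (intro conjI allI impI)
  fix a assume "f = [:-1, a, 1:]"
  then show "transpose_mat (mult_mat f g) = mult_mat f g"
    using transpose_mult_mat_quadratic gA by blast
next
  fix m u
  assume H: "m \<ge> 1 \<and> (f = monom 1 m + 1 \<or> f = monom 1 m - 1)
              \<and> degree u < degree f \<and> (monom 1 1 * u) mod f = 1"
  then have m: "m \<ge> 1" and u: "(monom 1 1 * u) mod f = 1" by auto
  obtain c :: 'a where fc: "f = monom 1 m - [:c:]" and cc: "c * c = 1"
  proof (cases "f = monom 1 m + 1")
    case True
    then have "f = monom 1 m - [:-1:]" by (simp add: one_pCons)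
    then show ?thesis using that[of "-1"] by simp
  next
    case False
    then have "f = monom 1 m - [:1:]" using H by (simp add: one_pCons)
    then show ?thesis using that[of 1] by simp
  qed
  have "degree g < m" using gA fc m by (simp add: degree_monom_minus_const)
  then show "transpose_mat (mult_mat f g) = mult_mat f (pcompose g u mod f)"
    by (rule transpose_mult_mat_monom_minus_const[OF fc m cc u])
  show "pcompose g u mod f = (reflect_poly g * u ^ degree g) mod f"
    by (rule pcompose_inverse_mod_eq_reflect[OF u])
qed

end
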